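(* For all integers $q\ge3$ and $n\ge3$ there exists a pyramid $PY_q^n$ in at least one of the spaces of constant curvature $\mathbb{S}^3$, $\mathbb{R}^3$, $\mathbb{H}^3$ (not necessarily in all of these spaces, and not necessarily of all sizes).
   Context: A generalized pyramid is a polyhedron with a distinguished $q$-gonal face, called the base, and $q$ possibly infinite triangles, called sides, that are adjacent in pairs and to the base (so the apex may be ideal or hyperideal in $\mathbb{H}^3$). $PY_q^n$ denotes a generalized pyramid such that the base is a regular $q$-gon, the pyramid is invariant under the rotation of angle $2\pi/q$ about the axis through the center of and perpendicular to the base, and the dihedral angle between adjacent sides is $2\pi/n$. *)

theory Defs
  imports Complex_Main
begin

text \<open>
  Uniform projective model of the three 3-dimensional spaces of constant curvature.
  Points and covectors are vectors of R^4 with coordinates (x0,x1,x2,x3).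
  \<^item> S^3 : unit sphere  x0^2+x1^2+x2^2+x3^2 = 1
  \<^item> R^3 : affine hyperplane x0 = 1
  \<^item> H^3 : hyperboloid  -x0^2+x1^2+x2^2+x3^2 = -1, x0 > 0
  A plane is the zero set of a covector u (via the pairing u.x), a closed
  half-space is  {x. u.x \<le> 0}  with outward normal u.
  Points of the projective closure of H^3 (ideal / hyperideal points) are nonzero
  vectors of R^4 up to scaling; a vector a with -a0^2+a1^2+a2^2+a3^2 < 0 is a proper
  point, = 0 an ideal point, > 0 a hyperideal point.
\<close>

datatype v4 = V4 real real real real

datatype geom = Sph | Euc | Hyp

fun c0 :: "v4 \<Rightarrow> real" where "c0 (V4 a b c d) = a"
fun c1 :: "v4 \<Rightarrow> real" where "c1 (V4 a b c d) = b"
fun c2 :: "v4 \<Rightarrow> real" where "c2 (V4 a b c d) = c"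
fun c3 :: "v4 \<Rightarrow> real" where "c3 (V4 a b c d) = d"

definition pair :: "v4 \<Rightarrow> v4 \<Rightarrow> real" where
  "pair u x = c0 u * c0 x + c1 u * c1 x + c2 u * c2 x + c3 u * c3 x"

definition lor :: "v4 \<Rightarrow> v4 \<Rightarrow> real" where
  "lor x y = - c0 x * c0 y + c1 x * c1 y + c2 x * c2 y + c3 x * c3 y"

fun curv :: "geom \<Rightarrow> real" where
  "curv Sph = 1" | "curv Euc = 0" | "curv Hyp = -1"

definition dform :: "geom \<Rightarrow> v4 \<Rightarrow> v4 \<Rightarrow> real" where
  "dform g u w = curv g * c0 u * c0 w + c1 u * c1 w + c2 u * c2 w + c3 u * c3 w"

fun space :: "geom \<Rightarrow> v4 set" where
  "space Sph = {x. c0 x ^ 2 + c1 x ^ 2 + c2 x ^ 2 + c3 x ^ 2 = 1}"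
| "space Euc = {x. c0 x = 1}"
| "space Hyp = {x. lor x x = -1 \<and> c0 x > 0}"

definition dihedral_angle :: "geom \<Rightarrow> v4 \<Rightarrow> v4 \<Rightarrow> real" where
  "dihedral_angle g u w = arccos (- dform g u w / sqrt (dform g u u * dform g w w))"

text \<open>rotation by angle th about the axis through the point C = (1,0,0,0)
  in direction of x3 (an isometry of each of the three models, acting equally
  on points and covectors)\<close>
fun rot :: "real \<Rightarrow> v4 \<Rightarrow> v4" where
  "rot th (V4 a b c d) = V4 a (cos th * b - sin th * c) (sin th * b + cos th * c) d"

definition centre :: v4 where "centre = V4 1 0 0 0"

text \<open>base plane x3 = 0, the pyramid lying in the half-space x3 \<ge> 0\<close>
definition base_cov :: v4 where "base_cov = V4 0 0 0 (-1)"

definition side_cov :: "nat \<Rightarrow> v4 \<Rightarrow> nat \<Rightarrow> v4" where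
  "side_cov q s k = rot (2 * pi * real k / real q) s"

definition pyr_poly :: "geom \<Rightarrow> nat \<Rightarrow> v4 \<Rightarrow> v4 set" where
  "pyr_poly g q s = {x \<in> space g. pair base_cov x \<le> 0 \<and> (\<forall>k<q. pair (side_cov q s k) x \<le> 0)}"

text \<open>The side covector s defines a generalized pyramid (in standard position:
  base in the plane x3 = 0 centred at C, axis the x3-axis through C, symmetric
  under rotation by 2 pi / q) when:
  the side planes are genuine planes; the centre C of the base lies strictly inside
  every side half-space; the base is a q-gon with (proper) vertex v lying on the
  base and on the adjacent sides 0 and 1 and strictly inside all other sides;
  and all side planes pass through a common apex a lying strictly on the pyramid
  side of the base, where in S^3 and R^3 the apex is a proper point, while in H^3
  it is a point of the projective closure which, if proper or ideal, lies above
  the base (otherwise it is hyperideal).\<close>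
definition is_gen_pyramid :: "geom \<Rightarrow> nat \<Rightarrow> v4 \<Rightarrow> bool" where
  "is_gen_pyramid g q s \<longleftrightarrow>
     3 \<le> q \<and>
     dform g s s > 0 \<and>
     (\<forall>k<q. pair (side_cov q s k) centre < 0) \<and>
     (\<exists>v \<in> space g. pair base_cov v = 0 \<and> pair (side_cov q s 0) v = 0 \<and>
        pair (side_cov q s 1) v = 0 \<and> (\<forall>k. 2 \<le> k \<and> k < q \<longrightarrow> pair (side_cov q s k) v < 0)) \<and>
     (if g = Hyp then
        (\<exists>a. a \<noteq> V4 0 0 0 0 \<and> (\<forall>k<q. pair (side_cov q s k) a = 0) \<and> c3 a \<noteq> 0 \<and>
             (lor a a \<le> 0 \<longrightarrow> c0 a * c3 a > 0))
      else
        (\<exists>a \<in> space g. (\<forall>k<q. pair (side_cov q s k) a = 0) \<and> pair base_cov a < 0))"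

definition PY_exists_in :: "geom \<Rightarrow> nat \<Rightarrow> nat \<Rightarrow> bool" where
  "PY_exists_in g q n \<longleftrightarrow>
     (\<exists>s. is_gen_pyramid g q s \<and>
          dihedral_angle g (side_cov q s 0) (side_cov q s 1) = 2 * pi / real n)"

end

theory Submission
  imports Defs
begin

text \<open>
  The pyramid is always found in \<open>H\<^sup>3\<close>, where a hyperideal apex is allowed.
  Take as outward normals of the sides the covectors
  \<open>(-1, \<lambda> cos (2\<pi>k/q), \<lambda> sin (2\<pi>k/q), \<sigma>)\<close>.  The base vertex on sides 0 and 1 is
  a proper point exactly when \<open>\<lambda> cos (\<pi>/q) > 1\<close>, and the dihedral angle is \<open>2\<pi>/n\<close>
  exactly when \<open>\<sigma>\<^sup>2 = 1 - \<lambda>\<^sup>2 Y\<close> with \<open>Y = (cos (2\<pi>/n) + cos (2\<pi>/q)) / (1 + cos (2\<pi>/n))\<close>.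
  Both can be met with \<open>\<sigma>\<^sup>2 > 0\<close> because \<open>Y < cos\<^sup>2 (\<pi>/q)\<close>.
\<close>

lemma cos_lt_cos_if_between:
  assumes "0 \<le> a" "a < x" "x < 2 * pi - a"
  shows "cos x < cos a"
proof (cases "x \<le> pi")
  case True
  then show ?thesis using assms by (intro cos_monotone_0_pi) auto
next
  case False
  have "cos (2 * pi - x) < cos a" using assms False by (intro cos_monotone_0_pi) auto
  then show ?thesis by (simp add: cos_diff)
qed

lemma exists_mult_gt_one_and_lt_one:
  fixes h Y :: real
  assumes "0 < h" "Y < h"
  shows "\<exists>L>0. 1 < L * h \<and> L * Y < 1"
proof -
  define L where "L = 2 / (h + max Y 0)"
  have "L > 0" using assms unfolding L_def by simp
  moreover have "1 < L * h" using assms unfolding L_def by (simp add: field_simps)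
  moreover have "L * Y < 1"
  proof (cases "Y \<le> 0")
    case True
    then show ?thesis using \<open>L > 0\<close> mult_nonneg_nonpos[of L Y] by linarith
  next
    case False
    then show ?thesis using assms unfolding L_def by (simp add: field_simps)
  qed
  ultimately show ?thesis by blast
qed

lemma side_cov_V4_axial:
  "side_cov q (V4 a b 0 d) k =
     V4 a (b * cos (2 * pi * real k / real q)) (b * sin (2 * pi * real k / real q)) d"
  unfolding side_cov_def by (simp add: mult.commute)

lemma dform_Hyp_side_cov:
  "dform Hyp (side_cov q (V4 (-1) lam 0 sig) j) (side_cov q (V4 (-1) lam 0 sig) k) =
     lam\<^sup>2 * cos (2 * pi * (real j - real k) / real q) + sig\<^sup>2 - 1"
  unfolding side_cov_V4_axial dform_def diff_divide_distrib right_diff_distrib cos_diff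
  by (simp add: algebra_simps power2_eq_square)

lemma side_cov_0: "side_cov q s 0 = s"
  unfolding side_cov_def by (cases s) simp

lemma pair_side_cov_base_vertex:
  "pair (side_cov q (V4 (-1) lam 0 sig) k)
        (V4 (lam * r * cos (pi / real q)) (r * cos (pi / real q)) (r * sin (pi / real q)) 0) =
     lam * r * (cos ((2 * real k - 1) * pi / real q) - cos (pi / real q))"
proof -
  have angle: "(2 * real k - 1) * pi / real q = 2 * pi * real k / real q - pi / real q"
    by (simp add: diff_divide_distrib[symmetric] algebra_simps)
  show ?thesis
    unfolding angle cos_diff side_cov_V4_axial pair_def by (simp add: algebra_simps)
qed

lemma base_vertex_Hyp:
  assumes q: "3 \<le> q" and lam: "1 < lam * cos (pi / real q)"
  shows "\<exists>v \<in> space Hyp. pair base_cov v = 0 \<and>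
           pair (side_cov q (V4 (-1) lam 0 sig) 0) v = 0 \<and>
           pair (side_cov q (V4 (-1) lam 0 sig) 1) v = 0 \<and>
           (\<forall>k. 2 \<le> k \<and> k < q \<longrightarrow> pair (side_cov q (V4 (-1) lam 0 sig) k) v < 0)"
proof -
  define \<theta> where "\<theta> = pi / real q"
  have "0 < \<theta>" "\<theta> < pi / 2" unfolding \<theta>_def using q by (auto simp: field_simps)
  then have cos_pos: "0 < cos \<theta>" by (intro cos_gt_zero_pi) auto
  have lam: "1 < lam * cos \<theta>" using lam unfolding \<theta>_def .
  then have lam_pos: "0 < lam" using cos_pos by (smt (verit) mult_nonpos_nonneg)
  define D where "D = (lam * cos \<theta>)\<^sup>2 - 1"
  have "0 < D" unfolding D_def using lam by (simp add: power2_gt_1_iff)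
  define r where "r = 1 / sqrt D"
  have r_pos: "0 < r" unfolding r_def using \<open>0 < D\<close> by simp
  have "r\<^sup>2 = 1 / D" unfolding r_def using \<open>0 < D\<close> by (simp add: power_divide)
  then have r_sq: "r\<^sup>2 * D = 1" using \<open>0 < D\<close> by simp
  define v where "v = V4 (lam * r * cos \<theta>) (r * cos \<theta>) (r * sin \<theta>) 0"
  have pair_v: "pair (side_cov q (V4 (-1) lam 0 sig) k) v =
      lam * r * (cos ((2 * real k - 1) * \<theta>) - cos \<theta>)" for k
    using pair_side_cov_base_vertex[of q lam sig k r] unfolding v_def \<theta>_def by simp
  have "lor v v = r\<^sup>2 * ((sin \<theta>)\<^sup>2 + (cos \<theta>)\<^sup>2 - (lam * cos \<theta>)\<^sup>2)"
    unfolding lor_def v_def c0.simps c1.simps c2.simps c3.simps power2_eq_square by algebra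
  also have "\<dots> = - (r\<^sup>2 * D)" unfolding D_def by (simp add: right_diff_distrib)
  finally have "lor v v = -1" using r_sq by simp
  then have "v \<in> space Hyp" using lam_pos r_pos cos_pos unfolding v_def by simp
  moreover have "pair (side_cov q (V4 (-1) lam 0 sig) k) v < 0" if "2 \<le> k" "k < q" for k
  proof -
    have "real k + 1 \<le> real q" using that by linarith
    then have "(2 * real k - 1) * \<theta> < 2 * pi - \<theta>"
      unfolding \<theta>_def using q by (simp add: field_simps)
    moreover have "\<theta> < (2 * real k - 1) * \<theta>" using that \<open>0 < \<theta>\<close> by simp
    ultimately have "cos ((2 * real k - 1) * \<theta>) < cos \<theta>"
      using \<open>0 < \<theta>\<close> by (intro cos_lt_cos_if_between) auto
    then show ?thesis unfolding pair_v using lam_pos r_pos by (simp add: mult_pos_neg)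
  qed
  moreover have "pair base_cov v = 0" "pair (side_cov q (V4 (-1) lam 0 sig) 0) v = 0"
    "pair (side_cov q (V4 (-1) lam 0 sig) 1) v = 0"
    unfolding pair_v by (simp_all add: base_cov_def v_def pair_def)
  ultimately show ?thesis by blast
qed

lemma is_gen_pyramid_Hyp:
  assumes q: "3 \<le> q" and lam: "1 < lam * cos (pi / real q)" and sig: "0 \<le> sig"
  shows "is_gen_pyramid Hyp q (V4 (-1) lam 0 sig)"
proof -
  let ?s = "V4 (-1) lam 0 sig"
  have "(lam * cos (pi / real q))\<^sup>2 \<le> lam\<^sup>2"
    using mult_left_le[of "(cos (pi / real q))\<^sup>2" "lam\<^sup>2"] abs_cos_le_one[of "pi / real q"]
    by (simp add: power_mult_distrib abs_square_le_1)
  moreover have "1 < (lam * cos (pi / real q))\<^sup>2" using lam by (simp add: power2_gt_1_iff)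
  moreover have "dform Hyp ?s ?s = lam\<^sup>2 + sig\<^sup>2 - 1"
    using dform_Hyp_side_cov[of q lam sig 0 0] unfolding side_cov_0 by simp
  ultimately have side_nondeg: "dform Hyp ?s ?s > 0"
    using zero_le_power2[of sig] by linarith
  have centre_inside: "pair (side_cov q ?s k) centre < 0" for k
    unfolding side_cov_V4_axial centre_def pair_def by simp
  have apex: "pair (side_cov q ?s k) (V4 sig 0 0 1) = 0" for k
    unfolding side_cov_V4_axial pair_def by simp
  have apex_above: "lor (V4 sig 0 0 1) (V4 sig 0 0 1) \<le> 0 \<longrightarrow> 0 < sig * 1"
    using sig by (cases "sig = 0") (auto simp: lor_def)
  show ?thesis
    unfolding is_gen_pyramid_def if_P[OF refl]
    using q side_nondeg centre_inside base_vertex_Hyp[OF q lam] apex apex_above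
    by (intro conjI allI impI exI[of _ "V4 sig 0 0 1"]) auto
qed

lemma dihedral_angle_Hyp_side_cov:
  assumes "lam\<^sup>2 + sig\<^sup>2 > 1"
  shows "dihedral_angle Hyp (side_cov q (V4 (-1) lam 0 sig) 0) (side_cov q (V4 (-1) lam 0 sig) 1) =
     arccos ((1 - lam\<^sup>2 * cos (2 * pi / real q) - sig\<^sup>2) / (lam\<^sup>2 + sig\<^sup>2 - 1))"
proof -
  have "sqrt ((lam\<^sup>2 + sig\<^sup>2 - 1) * (lam\<^sup>2 + sig\<^sup>2 - 1)) = lam\<^sup>2 + sig\<^sup>2 - 1"
    using assms by simp
  then show ?thesis
    unfolding dihedral_angle_def dform_Hyp_side_cov by (simp add: diff_diff_eq)
qed

lemma cos_angle_ratio_eq: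
  fixes c x L :: real
  assumes "0 < 1 + c" "x < 1" "0 < L"
  defines "Y \<equiv> (c + x) / (1 + c)"
  shows "1 < L + (1 - L * Y)" and "(1 - L * x - (1 - L * Y)) / (L + (1 - L * Y) - 1) = c"
proof -
  have one_minus_Y: "1 - Y = (1 - x) / (1 + c)"
    unfolding Y_def using assms by (simp add: field_simps)
  then have "0 < 1 - Y" using assms by simp
  then have "0 < L * (1 - Y)" using assms by simp
  then show "1 < L + (1 - L * Y)" by (simp add: algebra_simps)
  have "Y - x = c * (1 - Y)" unfolding one_minus_Y unfolding Y_def using assms
    by (simp add: field_simps)
  have "1 - L * x - (1 - L * Y) = L * (Y - x)" by (simp add: algebra_simps)
  also have "\<dots> = c * (L * (1 - Y))" using \<open>Y - x = c * (1 - Y)\<close> by simp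
  finally have numerator: "1 - L * x - (1 - L * Y) = c * (L * (1 - Y))" .
  have denominator: "L + (1 - L * Y) - 1 = L * (1 - Y)" by (simp add: algebra_simps)
  show "(1 - L * x - (1 - L * Y)) / (L + (1 - L * Y) - 1) = c"
    unfolding numerator denominator using \<open>0 < 1 - Y\<close> \<open>0 < L\<close> by simp
qed

lemma cos_angle_ratio_lt_cos_half_sq:
  fixes c t :: real
  assumes "-1 < c" "c < 1" "cos t < 1"
  shows "(c + cos t) / (1 + c) < (cos (t / 2))\<^sup>2"
proof -
  have "(cos (t / 2))\<^sup>2 = (1 + cos t) / 2" using cos_double_cos[of "t / 2"] by simp
  then have "(cos (t / 2))\<^sup>2 - (c + cos t) / (1 + c) = (1 - c) * (1 - cos t) / (2 * (1 + c))"
    using assms by (simp add: field_simps)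
  also have "\<dots> > 0" using assms by simp
  finally show ?thesis by simp
qed

lemma PY_exists_in_Hyp:
  assumes q: "3 \<le> q" and n: "3 \<le> n"
  shows "PY_exists_in Hyp q n"
proof -
  define t where "t = 2 * pi / real q"
  define c where "c = cos (2 * pi / real n)"
  define Y where "Y = (c + cos t) / (1 + c)"
  have angle_n: "0 < 2 * pi / real n" "2 * pi / real n < pi" using n by (auto simp: field_simps)
  have "cos pi < c" unfolding c_def using angle_n by (intro cos_monotone_0_pi) auto
  moreover have "c < cos 0" unfolding c_def using angle_n by (intro cos_monotone_0_pi) auto
  ultimately have c: "-1 < c" "c < 1" by auto
  have "0 < t" "t < pi" unfolding t_def using q by (auto simp: field_simps)
  then have "cos t < cos 0" by (intro cos_monotone_0_pi) auto
  then have cos_t: "cos t < 1" by simp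
  have "0 < pi / real q" "pi / real q < pi / 2" using q by (auto simp: field_simps)
  then have cos_pos: "0 < cos (pi / real q)" by (intro cos_gt_zero_pi) auto
  have "Y < (cos (pi / real q))\<^sup>2"
    using cos_angle_ratio_lt_cos_half_sq[OF c cos_t] unfolding Y_def t_def by simp
  then obtain L where L: "0 < L" "1 < L * (cos (pi / real q))\<^sup>2" "L * Y < 1"
    using exists_mult_gt_one_and_lt_one[of "(cos (pi / real q))\<^sup>2" Y] cos_pos by auto
  define lam where "lam = sqrt L"
  define sig where "sig = sqrt (1 - L * Y)"
  have lam_sq: "lam\<^sup>2 = L" and sig_sq: "sig\<^sup>2 = 1 - L * Y"
    unfolding lam_def sig_def using L by auto
  have "lam * cos (pi / real q) = sqrt (L * (cos (pi / real q))\<^sup>2)"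
    unfolding lam_def using cos_pos by (simp add: real_sqrt_mult)
  then have pyramid: "is_gen_pyramid Hyp q (V4 (-1) lam 0 sig)"
    using is_gen_pyramid_Hyp q L unfolding sig_def by simp
  have "1 < lam\<^sup>2 + sig\<^sup>2" "(1 - lam\<^sup>2 * cos t - sig\<^sup>2) / (lam\<^sup>2 + sig\<^sup>2 - 1) = c"
    using cos_angle_ratio_eq[of c "cos t" L] c cos_t L unfolding lam_sq sig_sq Y_def by auto
  then have "dihedral_angle Hyp (side_cov q (V4 (-1) lam 0 sig) 0)
      (side_cov q (V4 (-1) lam 0 sig) 1) = arccos c"
    using dihedral_angle_Hyp_side_cov unfolding t_def by simp
  moreover have "arccos c = 2 * pi / real n" unfolding c_def using angle_n by (simp add: arccos_cos)
  ultimately show ?thesis using pyramid unfolding PY_exists_in_def by auto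
qed

theorem mainTheorem10:
  fixes q n :: nat
  assumes "3 \<le> q" and "3 \<le> n"
  shows "\<exists>g \<in> {Sph, Euc, Hyp}. PY_exists_in g q n"
  using PY_exists_in_Hyp[OF assms] by blast

end
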